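(* For every integer $n\ge4$ there exists a real number $\alpha>0$ which is an infinite loop mod $n$.
   Context: For $\alpha$ with simple continued fraction $[a_0;a_1,\ldots]$, convergents $p_k/q_k$ are given by $p_{-1}=1,q_{-1}=0,p_0=a_0,q_0=1$, $p_k=a_kp_{k-1}+p_{k-2}$, $q_k=a_kq_{k-1}+q_{k-2}$, and semi-convergents are $(mp_k+p_{k-1})/(mq_k+q_{k-1})$ for $0\le m\le a_{k+1}$. A real $\alpha>0$ is an \emph{infinite loop mod $n$} if none of its semi-convergent denominators is divisible by $n$, except $q_{-1}=0$ (for rational $\alpha$, both finite expansions are considered and the expansion is regarded as ending with a partial quotient $\infty$, so all $m\ge0$ are allowed after the last convergent). *)

theory Defs
  imports Complex_Main
begin

text \<open>Partial quotients are a function a :: nat => nat (a 0 = a_0 >= 0 since alpha > 0;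
  a k >= 1 for k >= 1).  Index shift: cf_p a j = p_(j-1), cf_q a j = q_(j-1), so
  cf_p a 0 = p_(-1) = 1, cf_p a 1 = p_0 = a_0, cf_q a 0 = q_(-1) = 0, cf_q a 1 = q_0 = 1.\<close>

fun cf_p :: "(nat \<Rightarrow> nat) \<Rightarrow> nat \<Rightarrow> nat" where
  "cf_p a 0 = 1"
| "cf_p a (Suc 0) = a 0"
| "cf_p a (Suc (Suc j)) = a (Suc j) * cf_p a (Suc j) + cf_p a j"

fun cf_q :: "(nat \<Rightarrow> nat) \<Rightarrow> nat \<Rightarrow> nat" where
  "cf_q a 0 = 0"
| "cf_q a (Suc 0) = 1"
| "cf_q a (Suc (Suc j)) = a (Suc j) * cf_q a (Suc j) + cf_q a j"

definition finite_cf_expansion :: "(nat \<Rightarrow> nat) \<Rightarrow> nat \<Rightarrow> real \<Rightarrow> bool" where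
  "finite_cf_expansion a K \<alpha> \<longleftrightarrow>
     (\<forall>k. 1 \<le> k \<and> k \<le> K \<longrightarrow> 1 \<le> a k) \<and>
     \<alpha> = real (cf_p a (K + 1)) / real (cf_q a (K + 1))"

definition infinite_cf_expansion :: "(nat \<Rightarrow> nat) \<Rightarrow> real \<Rightarrow> bool" where
  "infinite_cf_expansion a \<alpha> \<longleftrightarrow>
     (\<forall>k\<ge>1. 1 \<le> a k) \<and>
     (\<lambda>k. real (cf_p a (k + 1)) / real (cf_q a (k + 1))) \<longlonglongrightarrow> \<alpha>"

definition semiconv_den :: "(nat \<Rightarrow> nat) \<Rightarrow> nat \<Rightarrow> nat \<Rightarrow> nat" where
  "semiconv_den a k m = m * cf_q a (k + 1) + cf_q a k"

text \<open>No semi-convergent denominator (other than q_(-1) = 0, i.e. k = 0, m = 0) is divisible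
  by n, for every expansion of alpha (both finite ones if alpha is rational; after the last
  convergent q_K, the partial quotient is infinite so all m >= 0 are allowed).\<close>
definition infinite_loop_mod :: "nat \<Rightarrow> real \<Rightarrow> bool" where
  "infinite_loop_mod n \<alpha> \<longleftrightarrow>
     (\<forall>a. infinite_cf_expansion a \<alpha> \<longrightarrow>
        (\<forall>k m. m \<le> a (k + 1) \<and> (k, m) \<noteq> (0, 0) \<longrightarrow> \<not> n dvd semiconv_den a k m)) \<and>
     (\<forall>a K. finite_cf_expansion a K \<alpha> \<longrightarrow>
        (\<forall>k m. k \<le> K \<and> (k < K \<longrightarrow> m \<le> a (k + 1)) \<and> (k, m) \<noteq> (0, 0) \<longrightarrow>
           \<not> n dvd semiconv_den a k m))"

end

theory Submission
  imports Defs
begin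

text \<open>For even n take 1/2: its expansions [0; 2] and [0; 1, 1] only have semi-convergent
  denominators 1, 2 or odd ones. For odd n take the irrational number
  [0; (n+1)/2, (n-3)/2, (n-3)/2, ...]: by induction 2^k q_k is congruent to 1 mod n, so
  2^k (m q_k + q_(k-1)) is congruent to m + 2, which lies strictly between 0 and n.
  The continued-fraction facts needed are that infinite expansions converge (Leibniz criterion
  via the determinant identity), are unique (the integer part determines a_0, then pass to the
  tail), and never represent rationals (the denominator strictly decreases on the tail).\<close>

definition cf_tail :: "(nat \<Rightarrow> nat) \<Rightarrow> nat \<Rightarrow> nat" where
  "cf_tail a i = a (Suc i)"

text \<open>In the indexing of the paper, \<^term>\<open>cf_conv a k\<close> is the convergent p_k / q_k.\<close>

definition cf_conv :: "(nat \<Rightarrow> nat) \<Rightarrow> nat \<Rightarrow> real" where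
  "cf_conv a k = real (cf_p a (Suc k)) / real (cf_q a (Suc k))"

lemma cf_p_q_tail:
  "cf_p a (Suc j) = a 0 * cf_p (cf_tail a) j + cf_q (cf_tail a) j \<and>
   cf_q a (Suc j) = cf_p (cf_tail a) j"
proof (induction a j rule: cf_q.induct)
  case (3 a j)
  then show ?case by (simp add: cf_tail_def algebra_simps)
qed (simp_all add: cf_tail_def)

lemma cf_p_Suc_tail: "cf_p a (Suc j) = a 0 * cf_p (cf_tail a) j + cf_q (cf_tail a) j"
  and cf_q_Suc_tail: "cf_q a (Suc j) = cf_p (cf_tail a) j"
  using cf_p_q_tail by blast+

lemma cf_q_pos: "\<forall>i\<in>{1..k}. 1 \<le> a i \<Longrightarrow> 0 < cf_q a (Suc k)"
  by (induction k) (auto simp: Suc_le_eq)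

lemma cf_p_pos: "\<forall>i\<le>k. 1 \<le> a i \<Longrightarrow> 0 < cf_p a (Suc k)"
  by (induction k) (auto simp: Suc_le_eq)

lemma cf_conv_0 [simp]: "cf_conv a 0 = a 0"
  by (simp add: cf_conv_def)

lemma cf_conv_Suc:
  assumes "\<forall>i\<in>{1..Suc k}. 1 \<le> a i"
  shows "cf_conv a (Suc k) = a 0 + 1 / cf_conv (cf_tail a) k"
proof -
  have "0 < cf_p (cf_tail a) (Suc k)"
    using assms by (intro cf_p_pos) (auto simp: cf_tail_def)
  then show ?thesis
    unfolding cf_conv_def cf_p_Suc_tail[of a "Suc k"] cf_q_Suc_tail[of a "Suc k"]
    by (simp add: field_simps)
qed

lemma cf_conv_bounds:
  assumes "\<forall>i\<in>{1..k}. 1 \<le> a i"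
  shows "a 0 \<le> cf_conv a k \<and> cf_conv a k \<le> a 0 + 1"
  using assms
proof (induction k arbitrary: a)
  case (Suc k)
  have "\<forall>i\<in>{1..k}. 1 \<le> cf_tail a i" and "1 \<le> cf_tail a 0"
    using Suc.prems by (auto simp: cf_tail_def)
  with Suc.IH have "1 \<le> cf_conv (cf_tail a) k" by fastforce
  then show ?case
    using cf_conv_Suc[OF Suc.prems] by simp
qed simp

lemma cf_conv_tail_ge_1:
  assumes "\<forall>i\<in>{1..Suc k}. 1 \<le> a i"
  shows "1 \<le> cf_conv (cf_tail a) k"
proof -
  have "\<forall>i\<in>{1..k}. 1 \<le> cf_tail a i" "1 \<le> cf_tail a 0"
    using assms by (auto simp: cf_tail_def)
  then show ?thesis
    using cf_conv_bounds[of k "cf_tail a"] by simp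
qed

lemma cf_conv_Suc_ge:
  assumes "\<forall>i\<in>{1..Suc k}. 1 \<le> a i"
  shows "a 0 + 1 / (real (a 1) + 1) \<le> cf_conv a (Suc k)"
proof -
  have "\<forall>i\<in>{1..k}. 1 \<le> cf_tail a i"
    using assms by (auto simp: cf_tail_def)
  then have "cf_conv (cf_tail a) k \<le> a 1 + 1"
    using cf_conv_bounds[of k "cf_tail a"] by (simp add: cf_tail_def)
  with cf_conv_tail_ge_1[OF assms] show ?thesis
    using cf_conv_Suc[OF assms] by (simp add: frac_le)
qed

lemma cf_det:
  "real (cf_p a (Suc j)) * real (cf_q a j) - real (cf_p a j) * real (cf_q a (Suc j)) = (-1) ^ Suc j"
proof (induction j)
  case (Suc j)
  have "real (cf_p a (Suc (Suc j))) * real (cf_q a (Suc j)) - real (cf_p a (Suc j)) * real (cf_q a (Suc (Suc j)))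
      = - (real (cf_p a (Suc j)) * real (cf_q a j) - real (cf_p a j) * real (cf_q a (Suc j)))"
    by (simp add: algebra_simps)
  with Suc.IH show ?case by simp
qed simp

lemma cf_conv_Suc_diff:
  assumes "\<forall>i\<ge>1. 1 \<le> a i"
  shows "cf_conv a (Suc k) - cf_conv a k = (-1) ^ k / (real (cf_q a (Suc k)) * real (cf_q a (Suc (Suc k))))"
proof -
  have "0 < cf_q a (Suc k)" "0 < cf_q a (Suc (Suc k))"
    using assms by (intro cf_q_pos; simp)+
  then show ?thesis
    using cf_det[of a "Suc k"] unfolding cf_conv_def
    by (simp add: diff_frac_eq mult.commute del: cf_p.simps cf_q.simps)
qed

lemma cf_q_mono:
  assumes "1 \<le> a (Suc k)"
  shows "cf_q a (Suc k) \<le> cf_q a (Suc (Suc k))"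
proof -
  have "1 * cf_q a (Suc k) \<le> a (Suc k) * cf_q a (Suc k)"
    using assms by (rule mult_le_mono1)
  then show ?thesis by (simp only: cf_q.simps mult_1_left trans_le_add1)
qed

lemma cf_q_ge_index:
  assumes "\<forall>i\<ge>1. 1 \<le> a i"
  shows "k \<le> cf_q a (Suc k)"
proof (induction k)
  case (Suc k)
  have recurrence: "cf_q a (Suc k) + cf_q a k \<le> cf_q a (Suc (Suc k))"
    using cf_q_mono[of a k] assms by simp
  show ?case
  proof (cases k)
    case 0
    then show ?thesis using assms by simp
  next
    case (Suc k')
    then have "1 \<le> cf_q a k"
      using cf_q_pos[of k' a] assms by simp
    with recurrence Suc.IH show ?thesis by linarith
  qed
qed simp

lemma infinite_cf_expansion_iff:
  "infinite_cf_expansion a \<alpha> \<longleftrightarrow> (\<forall>k\<ge>1. 1 \<le> a k) \<and> cf_conv a \<longlonglongrightarrow> \<alpha>"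
  by (simp add: infinite_cf_expansion_def cf_conv_def[abs_def])

lemma cf_q_prod_inverse_tendsto_0:
  assumes pos: "\<forall>k\<ge>1. 1 \<le> a k"
  shows "(\<lambda>k. 1 / (real (cf_q a (Suc k)) * real (cf_q a (Suc (Suc k))))) \<longlonglongrightarrow> 0"
proof (rule tendsto_sandwich[OF _ _ tendsto_const LIMSEQ_inverse_real_of_nat])
  have "1 \<le> real (cf_q a (Suc k))" for k
    using cf_q_pos[of k a] pos by simp
  then have "real (Suc k) \<le> real (cf_q a (Suc k)) * real (cf_q a (Suc (Suc k)))" for k
    using cf_q_ge_index[OF pos, of "Suc k"]
    by (metis mult_1 mult_mono of_nat_0_le_iff of_nat_le_iff)
  then show "\<forall>\<^sub>F k in sequentially. 1 / (real (cf_q a (Suc k)) * real (cf_q a (Suc (Suc k))))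
      \<le> inverse (real (Suc k))"
    by (simp add: divide_simps del: cf_q.simps)
  show "\<forall>\<^sub>F k in sequentially. 0 \<le> 1 / (real (cf_q a (Suc k)) * real (cf_q a (Suc (Suc k))))"
    by simp
qed

lemma cf_q_prod_inverse_decseq:
  assumes pos: "\<forall>k\<ge>1. 1 \<le> a k"
  shows "decseq (\<lambda>k. 1 / (real (cf_q a (Suc k)) * real (cf_q a (Suc (Suc k)))))"
proof (rule decseq_SucI)
  fix k
  have q_pos: "1 \<le> real (cf_q a (Suc i))" for i
    using cf_q_pos[of i a] pos by simp
  have "cf_q a (Suc k) \<le> cf_q a (Suc (Suc (Suc k)))"
    using cf_q_mono[of a k] cf_q_mono[of a "Suc k"] pos by simp
  then have "real (cf_q a (Suc (Suc k))) * real (cf_q a (Suc k))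
      \<le> real (cf_q a (Suc (Suc k))) * real (cf_q a (Suc (Suc (Suc k))))"
    by (intro mult_left_mono) (simp_all del: cf_q.simps)
  then show "1 / (real (cf_q a (Suc (Suc k))) * real (cf_q a (Suc (Suc (Suc k)))))
      \<le> 1 / (real (cf_q a (Suc k)) * real (cf_q a (Suc (Suc k))))"
    using q_pos[of k] q_pos[of "Suc k"] q_pos[of "Suc (Suc k)"]
    by (intro divide_left_mono) (auto simp: mult.commute intro!: mult_pos_pos simp del: cf_q.simps)
qed

lemma infinite_cf_expansion_exists:
  assumes pos: "\<forall>k\<ge>1. 1 \<le> a k"
  shows "\<exists>\<alpha>. infinite_cf_expansion a \<alpha>"
proof -
  define t where "t k = 1 / (real (cf_q a (Suc k)) * real (cf_q a (Suc (Suc k))))" for k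
  have "summable (\<lambda>k. (-1) ^ k * t k)"
    using cf_q_prod_inverse_tendsto_0[OF pos] cf_q_prod_inverse_decseq[OF pos]
    by (intro summable_Leibniz(1)) (simp_all add: t_def[abs_def] monoseq_iff)
  then have "(\<lambda>k. a 0 + (\<Sum>i<k. (-1) ^ i * t i)) \<longlonglongrightarrow> a 0 + (\<Sum>i. (-1) ^ i * t i)"
    by (intro tendsto_add tendsto_const summable_LIMSEQ)
  moreover have "cf_conv a = (\<lambda>k. a 0 + (\<Sum>i<k. (-1) ^ i * t i))"
    using sum_lessThan_telescope[of "cf_conv a"] cf_conv_Suc_diff[OF pos]
    by (simp add: t_def fun_eq_iff)
  ultimately show ?thesis
    using pos by (auto simp: infinite_cf_expansion_iff)
qed

lemma infinite_cf_expansion_bounds: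
  assumes "infinite_cf_expansion a \<alpha>"
  shows "a 0 < \<alpha>" "\<alpha> < a 0 + 1"
proof -
  have pos: "\<forall>k\<ge>1. 1 \<le> a k" and lim: "cf_conv a \<longlonglongrightarrow> \<alpha>"
    using assms by (auto simp: infinite_cf_expansion_iff)
  have lim1: "(\<lambda>k. cf_conv a (Suc k)) \<longlonglongrightarrow> \<alpha>" and lim2: "(\<lambda>k. cf_conv a (Suc (Suc k))) \<longlonglongrightarrow> \<alpha>"
    using LIMSEQ_Suc[OF lim] LIMSEQ_Suc[OF LIMSEQ_Suc[OF lim]] by simp_all
  have "a 0 + 1 / (real (a 1) + 1) \<le> cf_conv a (Suc k)" for k
    using pos by (intro cf_conv_Suc_ge) simp
  then have "a 0 + 1 / (real (a 1) + 1) \<le> \<alpha>"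
    by (intro LIMSEQ_le_const[OF lim1]) blast
  moreover have "0 < 1 / (real (a 1) + 1)"
    by simp
  ultimately show "a 0 < \<alpha>"
    by linarith
  define \<beta> :: real where "\<beta> = 1 + 1 / (real (a 2) + 1)"
  have "1 < \<beta>"
    by (simp add: \<beta>_def)
  have "cf_conv a (Suc (Suc k)) \<le> a 0 + 1 / \<beta>" for k
  proof -
    have "\<forall>i\<in>{1..Suc k}. 1 \<le> cf_tail a i" "1 \<le> cf_tail a 0"
      using pos by (auto simp: cf_tail_def)
    then have "\<beta> \<le> cf_conv (cf_tail a) (Suc k)"
      using cf_conv_Suc_ge[of k "cf_tail a"] by (simp add: \<beta>_def cf_tail_def numeral_2_eq_2)
    then show ?thesis
      using pos \<open>1 < \<beta>\<close> by (simp add: cf_conv_Suc frac_le)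
  qed
  then have "\<alpha> \<le> a 0 + 1 / \<beta>"
    by (intro LIMSEQ_le_const2[OF lim2]) blast
  moreover have "1 / \<beta> < 1"
    using \<open>1 < \<beta>\<close> by simp
  ultimately show "\<alpha> < a 0 + 1"
    by linarith
qed

lemma infinite_cf_expansion_tail:
  assumes "infinite_cf_expansion a \<alpha>"
  shows "infinite_cf_expansion (cf_tail a) (1 / (\<alpha> - a 0))"
proof -
  have pos: "\<forall>k\<ge>1. 1 \<le> a k" and lim: "cf_conv a \<longlonglongrightarrow> \<alpha>"
    using assms by (auto simp: infinite_cf_expansion_iff)
  have "cf_conv (cf_tail a) = (\<lambda>k. 1 / (cf_conv a (Suc k) - a 0))"
    using pos by (simp add: cf_conv_Suc fun_eq_iff)
  moreover have "(\<lambda>k. 1 / (cf_conv a (Suc k) - a 0)) \<longlonglongrightarrow> 1 / (\<alpha> - a 0)"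
    using infinite_cf_expansion_bounds(1)[OF assms]
    by (intro tendsto_intros LIMSEQ_Suc[OF lim]) simp
  ultimately show ?thesis
    using pos by (simp add: infinite_cf_expansion_iff cf_tail_def)
qed

lemma infinite_cf_expansion_0:
  assumes "infinite_cf_expansion a \<alpha>"
  shows "a 0 = nat \<lfloor>\<alpha>\<rfloor>"
proof -
  have "\<lfloor>\<alpha>\<rfloor> = int (a 0)"
    using infinite_cf_expansion_bounds[OF assms] by (intro floor_unique) simp_all
  then show ?thesis by simp
qed

lemma infinite_cf_expansion_unique:
  assumes "infinite_cf_expansion a \<alpha>" "infinite_cf_expansion b \<alpha>"
  shows "a = b"
proof
  show "a k = b k" for k
    using assms
  proof (induction k arbitrary: a b \<alpha>)
    case 0
    then show ?case by (simp add: infinite_cf_expansion_0)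
  next
    case (Suc k)
    have "a 0 = b 0"
      using Suc.prems by (simp add: infinite_cf_expansion_0)
    then have "cf_tail a k = cf_tail b k"
      using Suc.IH[OF infinite_cf_expansion_tail[OF Suc.prems(1)]]
        infinite_cf_expansion_tail[OF Suc.prems(2)] by simp
    then show ?case by (simp add: cf_tail_def)
  qed
qed

lemma infinite_cf_expansion_not_ratio:
  assumes "infinite_cf_expansion a \<alpha>" "0 < Q"
  shows "\<alpha> \<noteq> real P / real Q"
  using assms
proof (induction Q arbitrary: P a \<alpha> rule: less_induct)
  case (less Q)
  show ?case
  proof
    assume \<alpha>: "\<alpha> = real P / real Q"
    have "a 0 * Q < P" "P < (a 0 + 1) * Q"
      using infinite_cf_expansion_bounds[OF less.prems(1)] less.prems(2)
      by (simp_all add: \<alpha> field_simps flip: of_nat_mult of_nat_add of_nat_less_iff)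
    then have Q': "0 < P - a 0 * Q" "P - a 0 * Q < Q"
      by simp_all
    have "1 / (\<alpha> - a 0) = real Q / real (P - a 0 * Q)"
      using \<open>a 0 * Q < P\<close> less.prems(2) by (simp add: \<alpha> of_nat_diff field_simps)
    with less.IH[OF Q'(2) infinite_cf_expansion_tail[OF less.prems(1)] Q'(1), of Q]
    show False by blast
  qed
qed

lemma finite_cf_expansion_iff:
  "finite_cf_expansion a K \<alpha> \<longleftrightarrow> (\<forall>k\<in>{1..K}. 1 \<le> a k) \<and> \<alpha> = cf_conv a K"
  by (auto simp: finite_cf_expansion_def cf_conv_def)

lemma cf_conv_Suc_gt:
  assumes "\<forall>i\<in>{1..Suc k}. 1 \<le> a i"
  shows "a 0 < cf_conv a (Suc k)"
proof -
  have "0 < 1 / (real (a 1) + 1)"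
    by simp
  with cf_conv_Suc_ge[OF assms] show ?thesis
    by linarith
qed

lemma cf_conv_eq_1:
  assumes "\<forall>i\<le>k. 1 \<le> a i" "cf_conv a k = 1"
  shows "k = 0 \<and> a 0 = 1"
proof (cases k)
  case 0
  then show ?thesis using assms by simp
next
  case (Suc k')
  then have "a 0 < cf_conv a k"
    using assms(1) by (simp add: cf_conv_Suc_gt)
  moreover have "1 \<le> a 0"
    using assms(1) by simp
  ultimately show ?thesis
    using assms(2) by simp
qed

lemma cf_conv_eq_2:
  assumes "\<forall>i\<le>k. 1 \<le> a i" "cf_conv a k = 2"
  shows "k = 0 \<and> a 0 = 2 \<or> k = 1 \<and> a 0 = 1 \<and> a 1 = 1"
proof (cases k)
  case 0
  then show ?thesis using assms by simp
next
  case (Suc k')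
  have pos: "\<forall>i\<in>{1..Suc k'}. 1 \<le> a i"
    using assms(1) Suc by simp
  have "a 0 < 2"
    using cf_conv_Suc_gt[OF pos] assms(2) Suc by simp
  moreover have "1 \<le> a 0"
    using assms(1) by simp
  ultimately have a0: "a 0 = 1"
    by linarith
  then have "cf_conv (cf_tail a) k' = 1"
    using cf_conv_Suc[OF pos] assms(2) Suc by simp
  then have "k' = 0 \<and> a 1 = 1"
    using cf_conv_eq_1[of k' "cf_tail a"] assms(1) Suc by (simp add: cf_tail_def)
  with a0 Suc show ?thesis
    by simp
qed

lemma finite_cf_expansion_half:
  assumes "finite_cf_expansion a K (1/2)"
  shows "K = 1 \<and> a 1 = 2 \<or> K = 2 \<and> a 1 = 1 \<and> a 2 = 1"
proof -
  have pos: "\<forall>k\<in>{1..K}. 1 \<le> a k" and conv: "cf_conv a K = 1/2"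
    using assms by (auto simp: finite_cf_expansion_iff)
  obtain K1 where K: "K = Suc K1"
  proof (cases K)
    case 0
    then have "real (2 * a 0) = real 1"
      using conv by simp
    then have False
      by (simp only: of_nat_eq_iff) presburger
    then show ?thesis ..
  qed
  have "a 0 = 0"
    using cf_conv_Suc_gt[of K1 a] pos conv K by simp
  then have "cf_conv (cf_tail a) K1 = 2"
    using cf_conv_Suc[of K1 a] pos conv K by simp
  then have "K1 = 0 \<and> a 1 = 2 \<or> K1 = 1 \<and> a 1 = 1 \<and> a 2 = 1"
    using cf_conv_eq_2[of K1 "cf_tail a"] pos K by (simp add: cf_tail_def numeral_2_eq_2)
  then show ?thesis
    using K by auto
qed

lemma semiconv_den_half:
  assumes "finite_cf_expansion a K (1/2)" "k \<le> K" "k < K \<longrightarrow> m \<le> a (k + 1)" "(k, m) \<noteq> (0, 0)"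
  shows "semiconv_den a k m \<in> {1, 2} \<or> odd (semiconv_den a k m)"
proof -
  have "k = 0 \<or> k = 1 \<or> k = 2" "K \<le> 2"
    using finite_cf_expansion_half[OF assms(1)] assms(2) by auto
  then show ?thesis
    using finite_cf_expansion_half[OF assms(1)] assms(2-4)
    by (auto simp: semiconv_den_def numeral_eq_Suc) presburger+
qed

lemma infinite_loop_mod_half:
  assumes "4 \<le> n" "even n"
  shows "infinite_loop_mod n (1/2)"
  unfolding infinite_loop_mod_def
proof (intro conjI allI impI)
  fix a k m
  assume "infinite_cf_expansion a (1/2)"
  then show "\<not> n dvd semiconv_den a k m"
    using infinite_cf_expansion_not_ratio[of a "1/2" 2 1] by simp
next
  fix a K k m
  assume "finite_cf_expansion a K (1/2)" "k \<le> K \<and> (k < K \<longrightarrow> m \<le> a (k + 1)) \<and> (k, m) \<noteq> (0, 0)"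
  then have "semiconv_den a k m \<in> {1, 2} \<or> odd (semiconv_den a k m)"
    by (intro semiconv_den_half) auto
  moreover have "even d" if "n dvd d" for d
    using \<open>even n\<close> that by (rule dvd_trans)
  ultimately show "\<not> n dvd semiconv_den a k m"
    using \<open>4 \<le> n\<close> by (auto dest: dvd_imp_le)
qed

lemma infinite_loop_mod_of_expansion:
  assumes "infinite_cf_expansion a \<alpha>"
    and "\<forall>k m. m \<le> a (k + 1) \<and> (k, m) \<noteq> (0, 0) \<longrightarrow> \<not> n dvd semiconv_den a k m"
  shows "infinite_loop_mod n \<alpha>"
  unfolding infinite_loop_mod_def
proof (intro conjI allI impI)
  fix b k m
  assume "infinite_cf_expansion b \<alpha>" "m \<le> b (k + 1) \<and> (k, m) \<noteq> (0, 0)"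
  then show "\<not> n dvd semiconv_den b k m"
    using assms infinite_cf_expansion_unique by blast
next
  fix b K k m
  assume "finite_cf_expansion b K \<alpha>"
  then have "\<alpha> = real (cf_p b (Suc K)) / real (cf_q b (Suc K))" "0 < cf_q b (Suc K)"
    by (simp_all add: finite_cf_expansion_def cf_q_pos)
  then show "\<not> n dvd semiconv_den b k m"
    using infinite_cf_expansion_not_ratio[OF assms(1)] by blast
qed

text \<open>Modulo n the partial quotients (n+1)/2 and (n-3)/2 are 1/2 and -3/2, which is exactly
  what makes 2^k q_k congruent to 1.\<close>

definition odd_loop_cf :: "nat \<Rightarrow> nat \<Rightarrow> nat" where
  "odd_loop_cf n k = (if k = 0 then 0 else if k = 1 then (n + 1) div 2 else (n - 3) div 2)"

lemma odd_loop_cf_q_mod: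
  assumes "odd n" "5 \<le> n"
  shows "cf_q (odd_loop_cf n) (Suc j) * 2 ^ j mod n = 1"
proof (induction j rule: induct_nat_012)
  case 0
  show ?case using assms by simp
next
  case 1
  have "2 * ((n + 1) div 2) = n + 1"
    using assms by simp
  then show ?case
    using assms by (simp add: odd_loop_cf_def mult.commute mod_Suc)
next
  case (ge2 j)
  define X where "X = cf_q (odd_loop_cf n) (Suc j) * 2 ^ j"
  define Y where "Y = cf_q (odd_loop_cf n) (Suc (Suc j)) * 2 ^ Suc j"
  have "cf_q (odd_loop_cf n) (Suc (Suc (Suc j))) * 2 ^ Suc (Suc j) = 2 * ((n - 3) div 2) * Y + 4 * X"
    by (simp add: X_def Y_def odd_loop_cf_def algebra_simps)
  also have "\<dots> mod n = (2 * ((n - 3) div 2) * (Y mod n) + 4 * (X mod n)) mod n"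
    by (intro mod_add_cong mod_mult_cong) simp_all
  also have "\<dots> = (n + 1) mod n"
    using ge2 assms by (simp add: X_def Y_def)
  also have "\<dots> = 1"
    using assms by (simp add: mod_Suc)
  finally show ?case .
qed

lemma odd_loop_cf_pos: "5 \<le> n \<Longrightarrow> \<forall>k\<ge>1. 1 \<le> odd_loop_cf n k"
  by (auto simp: odd_loop_cf_def)

lemma semiconv_den_odd_loop_mod:
  assumes "odd n" "5 \<le> n"
  shows "semiconv_den (odd_loop_cf n) (Suc j) m * 2 ^ Suc j mod n = (m + 2) mod n"
proof -
  define X where "X = cf_q (odd_loop_cf n) (Suc j) * 2 ^ j"
  define Y where "Y = cf_q (odd_loop_cf n) (Suc (Suc j)) * 2 ^ Suc j"
  have "semiconv_den (odd_loop_cf n) (Suc j) m * 2 ^ Suc j = m * Y + 2 * X"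
    by (simp add: semiconv_den_def X_def Y_def algebra_simps del: cf_q.simps)
  also have "\<dots> mod n = (m * (Y mod n) + 2 * (X mod n)) mod n"
    by (intro mod_add_cong mod_mult_cong) simp_all
  also have "\<dots> = (m + 2) mod n"
    using odd_loop_cf_q_mod[OF assms, of j] odd_loop_cf_q_mod[OF assms, of "Suc j"]
    by (simp add: X_def Y_def del: cf_q.simps)
  finally show ?thesis .
qed

lemma infinite_loop_mod_odd_loop:
  assumes "odd n" "5 \<le> n" "infinite_cf_expansion (odd_loop_cf n) \<alpha>"
  shows "infinite_loop_mod n \<alpha>"
proof (rule infinite_loop_mod_of_expansion[OF assms(3)], intro allI impI)
  fix k m
  assume km: "m \<le> odd_loop_cf n (k + 1) \<and> (k, m) \<noteq> (0, 0)"
  show "\<not> n dvd semiconv_den (odd_loop_cf n) k m"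
  proof (cases k)
    case 0
    then have "semiconv_den (odd_loop_cf n) k m = m" "0 < m" "m < n"
      using km assms by (auto simp: semiconv_den_def odd_loop_cf_def)
    then show ?thesis
      by (auto dest: dvd_imp_le)
  next
    case (Suc j)
    then have "m + 2 < n"
      using km assms by (auto simp: odd_loop_cf_def)
    then have "\<not> n dvd semiconv_den (odd_loop_cf n) k m * 2 ^ k"
      using semiconv_den_odd_loop_mod[OF assms(1,2), of j m] by (simp add: Suc dvd_eq_mod_eq_0)
    then show ?thesis
      by (auto intro: dvd_mult2)
  qed
qed

theorem mainTheorem7:
  fixes n :: nat
  assumes "4 \<le> n"
  shows "\<exists>\<alpha>::real. \<alpha> > 0 \<and> infinite_loop_mod n \<alpha>"
proof (cases "even n")
  case True
  then show ?thesis
    using infinite_loop_mod_half[OF assms] by (intro exI[of _ "1/2"]) simp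
next
  case False
  with assms have "5 \<le> n"
    by presburger
  then obtain \<alpha> where \<alpha>: "infinite_cf_expansion (odd_loop_cf n) \<alpha>"
    using infinite_cf_expansion_exists odd_loop_cf_pos by blast
  then have "0 < \<alpha>"
    using infinite_cf_expansion_bounds(1) by (fastforce simp: odd_loop_cf_def)
  then show ?thesis
    using infinite_loop_mod_odd_loop[OF False \<open>5 \<le> n\<close> \<alpha>] by blast
qed

end
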